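(* Let $V$ be a commutative unital quantale whose underlying lattice is a frame. Let $(X,a,+)$ be a $V$-group, $Y$ a group, and $f\colon X\to Y$ a surjective group homomorphism. Define $b\colon Y\times Y\to V$ by $b(y_1,y_2)=\bigvee\{a(x_1,x_2)\mid x_1,x_2\in X,\ f(x_1)=y_1,\ f(x_2)=y_2\}$. Then $(Y,b,+)$ is a $V$-group and $f\colon(X,a,+)\to(Y,b,+)$ is a $V$-homomorphism.
   Context: A commutative unital quantale $V$ is a complete lattice with a commutative associative operation $\otimes$ with unit $k$ preserving arbitrary joins in each variable. A $V$-category $(X,a)$: $a\colon X\times X\to V$ with $k\le a(x,x)$ and $a(x,x')\otimes a(x',x'')\le a(x,x'')$. A $V$-group $(X,a,+)$ is a $V$-category with a group structure (additive, not necessarily abelian) such that $a(x_1,x_2)\otimes a(x_1',x_2')\le a(x_1+x_1',x_2+x_2')$. A $V$-homomorphism is a group homomorphism $f$ with $a(x,x')\le b(f(x),f(x'))$. *)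

theory Defs
  imports Main
begin

definition cu_quantale :: "('v::complete_lattice \<Rightarrow> 'v \<Rightarrow> 'v) \<Rightarrow> 'v \<Rightarrow> bool" where
  "cu_quantale t k \<longleftrightarrow>
     (\<forall>x y z. t (t x y) z = t x (t y z)) \<and>
     (\<forall>x y. t x y = t y x) \<and>
     (\<forall>x. t k x = x \<and> t x k = x) \<and>
     (\<forall>x A. t x (Sup A) = Sup ((\<lambda>y. t x y) ` A)) \<and>
     (\<forall>x A. t (Sup A) x = Sup ((\<lambda>y. t y x) ` A))"

definition is_frame :: "'v::complete_lattice itself \<Rightarrow> bool" where
  "is_frame _ \<longleftrightarrow> (\<forall>(x::'v) A. inf x (Sup A) = Sup ((\<lambda>y. inf x y) ` A))"

definition V_category :: "('v::complete_lattice \<Rightarrow> 'v \<Rightarrow> 'v) \<Rightarrow> 'v \<Rightarrow> ('x \<Rightarrow> 'x \<Rightarrow> 'v) \<Rightarrow> bool" where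
  "V_category t k a \<longleftrightarrow>
     (\<forall>x. k \<le> a x x) \<and> (\<forall>x x' x''. t (a x x') (a x' x'') \<le> a x x'')"

definition V_group :: "('v::complete_lattice \<Rightarrow> 'v \<Rightarrow> 'v) \<Rightarrow> 'v \<Rightarrow> ('x::group_add \<Rightarrow> 'x \<Rightarrow> 'v) \<Rightarrow> bool" where
  "V_group t k a \<longleftrightarrow> V_category t k a \<and>
     (\<forall>x1 x2 x1' x2'. t (a x1 x2) (a x1' x2') \<le> a (x1 + x1') (x2 + x2'))"

definition group_hom :: "('x::group_add \<Rightarrow> 'y::group_add) \<Rightarrow> bool" where
  "group_hom f \<longleftrightarrow> (\<forall>x y. f (x + y) = f x + f y)"

definition V_hom :: "('x::group_add \<Rightarrow> 'x \<Rightarrow> 'v::complete_lattice) \<Rightarrow> ('y::group_add \<Rightarrow> 'y \<Rightarrow> 'v) \<Rightarrow> ('x \<Rightarrow> 'y) \<Rightarrow> bool" where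
  "V_hom a b f \<longleftrightarrow> group_hom f \<and> (\<forall>x x'. a x x' \<le> b (f x) (f x'))"

end

theory Submission
  imports Defs
begin

text \<open>Since tensoring preserves joins, the tensor of two joins over fibres of \<open>f\<close> is the join of
  the tensors of their members, so every axiom for the pushed-forward structure reduces to an
  inequality between values of \<open>a\<close>. Compatibility with addition is inherited directly because \<open>f\<close>
  is additive, and reflexivity because \<open>f\<close> is surjective. For transitivity, two arrows
  \<open>x\<^sub>1 \<rightarrow> x\<^sub>2\<close> and \<open>x\<^sub>3 \<rightarrow> x\<^sub>4\<close> with \<open>f x\<^sub>2 = f x\<^sub>3\<close> are made composable by translating the second
  on the right by \<open>d = - x\<^sub>3 + x\<^sub>2 \<in> ker f\<close>; this costs nothing because \<open>k \<le> a d d\<close>.\<close>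

definition V_image :: "('x \<Rightarrow> 'y) \<Rightarrow> ('x \<Rightarrow> 'x \<Rightarrow> 'v::complete_lattice) \<Rightarrow> 'y \<Rightarrow> 'y \<Rightarrow> 'v" where
  "V_image f a y1 y2 = Sup {a x1 x2 | x1 x2. f x1 = y1 \<and> f x2 = y2}"

lemma cu_quantale_Sup_tensor_le:
  assumes "cu_quantale t k"
    and "\<And>u v. u \<in> A \<Longrightarrow> v \<in> B \<Longrightarrow> t u v \<le> c"
  shows "t (Sup A) (Sup B) \<le> c"
proof -
  have Sup_left: "t (Sup A) w = Sup ((\<lambda>u. t u w) ` A)"
    and Sup_right: "t u (Sup B) = Sup ((\<lambda>v. t u v) ` B)" for u w
    using assms(1) unfolding cu_quantale_def by blast+
  have "t u (Sup B) \<le> c" if "u \<in> A" for u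
    unfolding Sup_right using assms(2) that by (auto intro!: Sup_least)
  then show ?thesis
    unfolding Sup_left by (auto intro!: Sup_least)
qed

lemma cu_quantale_tensor_mono_right:
  assumes "cu_quantale t k" and "x \<le> y"
  shows "t z x \<le> t z y"
proof -
  have "t z y = t z (Sup {x, y})"
    using assms(2) by (simp add: sup_absorb2)
  also have "\<dots> = Sup ((\<lambda>v. t z v) ` {x, y})"
    using assms(1) unfolding cu_quantale_def by (elim conjE allE)
  also have "\<dots> = sup (t z x) (t z y)"
    by simp
  finally show ?thesis
    by (metis sup.cobounded1)
qed

lemma group_hom_zero:
  assumes "group_hom f"
  shows "f 0 = 0"
proof -
  have "f 0 + 0 = f 0 + f 0"
    using assms unfolding group_hom_def by (metis add.right_neutral)
  then show ?thesis
    by (simp only: add_left_cancel)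
qed

lemma group_hom_minus:
  assumes "group_hom f"
  shows "f (- x) = - f x"
  using assms group_hom_zero[OF assms] unfolding group_hom_def
  by (metis add.right_inverse minus_unique)

lemma V_group_le_add_right:
  assumes "cu_quantale t k" and "V_group t k a"
  shows "a x y \<le> a (x + d) (y + d)"
proof -
  have "a x y = t (a x y) k"
    using assms(1) unfolding cu_quantale_def by simp
  also have "\<dots> \<le> t (a x y) (a d d)"
    using assms(2) unfolding V_group_def V_category_def
    by (intro cu_quantale_tensor_mono_right[OF assms(1)]) simp
  also have "\<dots> \<le> a (x + d) (y + d)"
    using assms(2) unfolding V_group_def by blast
  finally show ?thesis .
qed

lemma V_image_upper: "a x1 x2 \<le> V_image f a (f x1) (f x2)"
  unfolding V_image_def by (rule Sup_upper) blast

lemma V_image_tensor_le: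
  assumes "cu_quantale t k"
    and "\<And>x1 x2 x3 x4. f x1 = y1 \<Longrightarrow> f x2 = y2 \<Longrightarrow> f x3 = y3 \<Longrightarrow> f x4 = y4 \<Longrightarrow>
           t (a x1 x2) (a x3 x4) \<le> c"
  shows "t (V_image f a y1 y2) (V_image f a y3 y4) \<le> c"
  unfolding V_image_def
proof (rule cu_quantale_Sup_tensor_le[OF assms(1)])
  fix u v
  assume "u \<in> {a x1 x2 | x1 x2. f x1 = y1 \<and> f x2 = y2}"
    and "v \<in> {a x3 x4 | x3 x4. f x3 = y3 \<and> f x4 = y4}"
  then obtain x1 x2 x3 x4 where "u = a x1 x2" "v = a x3 x4"
    and "f x1 = y1" "f x2 = y2" "f x3 = y3" "f x4 = y4"
    by blast
  then show "t u v \<le> c"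
    using assms(2) by simp
qed

lemma V_image_refl:
  assumes "V_category t k a" and "surj f"
  shows "k \<le> V_image f a y y"
proof -
  obtain x where "y = f x"
    using assms(2) by blast
  then show ?thesis
    using assms(1) V_image_upper[of a x x f] unfolding V_category_def by (metis order.trans)
qed

lemma V_image_trans:
  assumes q: "cu_quantale t k" and a: "V_group t k a" and f: "group_hom f"
  shows "t (V_image f a y1 y2) (V_image f a y2 y3) \<le> V_image f a y1 y3"
proof (rule V_image_tensor_le[OF q])
  fix x1 x2 x3 x4
  assume fx: "f x1 = y1" "f x2 = y2" "f x3 = y2" "f x4 = y3"
  define d where "d = - x3 + x2"
  have "x3 + d = x2"
    unfolding d_def by (simp add: add.assoc)
  then have shifted: "a x3 x4 \<le> a x2 (x4 + d)"
    using V_group_le_add_right[OF q a] by metis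
  have "f (x4 + d) = y3"
    unfolding d_def using f fx group_hom_minus[OF f] unfolding group_hom_def by simp
  have "t (a x1 x2) (a x3 x4) \<le> t (a x1 x2) (a x2 (x4 + d))"
    using cu_quantale_tensor_mono_right[OF q shifted] .
  also have "\<dots> \<le> a x1 (x4 + d)"
    using a unfolding V_group_def V_category_def by blast
  also have "\<dots> \<le> V_image f a y1 y3"
    using V_image_upper[of a x1 "x4 + d" f] \<open>f x1 = y1\<close> \<open>f (x4 + d) = y3\<close> by simp
  finally show "t (a x1 x2) (a x3 x4) \<le> V_image f a y1 y3" .
qed

lemma V_image_add:
  assumes q: "cu_quantale t k" and a: "V_group t k a" and f: "group_hom f"
  shows "t (V_image f a y1 y2) (V_image f a y1' y2') \<le> V_image f a (y1 + y1') (y2 + y2')"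
proof (rule V_image_tensor_le[OF q])
  fix x1 x2 x1' x2'
  assume "f x1 = y1" "f x2 = y2" "f x1' = y1'" "f x2' = y2'"
  then have "V_image f a (f (x1 + x1')) (f (x2 + x2')) = V_image f a (y1 + y1') (y2 + y2')"
    using f unfolding group_hom_def by simp
  moreover have "t (a x1 x2) (a x1' x2') \<le> a (x1 + x1') (x2 + x2')"
    using a unfolding V_group_def by blast
  ultimately show "t (a x1 x2) (a x1' x2') \<le> V_image f a (y1 + y1') (y2 + y2')"
    using V_image_upper[of a "x1 + x1'" "x2 + x2'" f] by (metis order.trans)
qed

lemma V_group_V_image:
  assumes "cu_quantale t k" and "V_group t k a" and "group_hom f" and "surj f"
  shows "V_group t k (V_image f a)"
proof -
  have "V_category t k a"
    using assms(2) unfolding V_group_def by blast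
  then have "k \<le> V_image f a y y" for y
    using assms(4) by (rule V_image_refl)
  then show ?thesis
    unfolding V_group_def V_category_def
    using V_image_trans[OF assms(1-3)] V_image_add[OF assms(1-3)] by simp
qed

lemma V_hom_V_image:
  assumes "group_hom f"
  shows "V_hom a (V_image f a) f"
  using assms unfolding V_hom_def by (simp add: V_image_upper)

theorem proposition3p7:
  fixes t :: "'v::complete_lattice \<Rightarrow> 'v \<Rightarrow> 'v" and k :: 'v
    and a :: "'x::group_add \<Rightarrow> 'x \<Rightarrow> 'v" and f :: "'x \<Rightarrow> 'y::group_add"
    and b :: "'y \<Rightarrow> 'y \<Rightarrow> 'v"
  assumes "cu_quantale t k"
    and "is_frame TYPE('v)"
    and "V_group t k a"
    and "group_hom f"
    and "surj f"
    and "\<And>y1 y2. b y1 y2 = Sup {a x1 x2 | x1 x2. f x1 = y1 \<and> f x2 = y2}"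
  shows "V_group t k b \<and> V_hom a b f"
proof -
  have "b = V_image f a"
    using assms(6) unfolding V_image_def by (intro ext) simp
  then show ?thesis
    using V_group_V_image[OF assms(1,3,4,5)] V_hom_V_image[OF assms(4)] by simp
qed

end
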